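(* Assume (A1)–(A4). Then there exist $q>0$, $K>0$, $\delta>0$ and $b>0$ such that, with $V(x)=W(x)=1+qx^2$ and $C=[-K,K]$, $$\log\big(e^{-V}Pe^{V}\big)(x)\le-\delta W(x)+b\mathbf{1}_C(x)\quad\text{for all }x\in\mathbb{R},$$ where $Pe^V(x)=\mathbb{E}\,e^{V(x+\mu(x)+\sigma(x)\varepsilon_1)}$.
   Context: $\mu,\sigma:\mathbb{R}\to\mathbb{R}$ measurable, $(\varepsilon_t)$ i.i.d. Assumptions: (A1) $\varepsilon_1$ has a density w.r.t. Lebesgue measure, bounded and bounded away from $0$ on compacts; (A2) $\mu$ locally bounded, $\sigma$ positive, bounded away from $0$ on compacts, globally bounded; (A3) $\limsup_{|x|\to\infty}|x+\mu(x)|/|x|<1$; (A4) $\mathbb{E}e^{\kappa\varepsilon_1^2}<\infty$ for some $\kappa>0$ and $\mathbb{E}\varepsilon_1=0$. $P(x,A)=\mathbb{P}(x+\mu(x)+\sigma(x)\varepsilon_1\in A)$ is the transition kernel of the chain $X_t=X_{t-1}+\mu(X_{t-1})+\sigma(X_{t-1})\varepsilon_t$. *)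

theory Defs
  imports "HOL-Probability.Probability"
begin

definition Pexp :: "real measure \<Rightarrow> (real \<Rightarrow> real) \<Rightarrow> (real \<Rightarrow> real) \<Rightarrow> (real \<Rightarrow> real) \<Rightarrow> real \<Rightarrow> real" where
  "Pexp D mu sg V x = (\<integral>e. exp (V (x + mu x + sg x * e)) \<partial>D)"

end

theory Submission
  imports Defs
begin

text \<open>
  For V(y) = 1 + q y^2 and m = x + mu x, Peter--Paul gives
  V(m + s e) \<le> 1 + q(1+\<eta>) m^2 + q(1+1/\<eta>) s^2 e^2.  Choosing q so small that
  q(1+1/\<eta>) sigma^2 \<le> \<kappa> uniformly (sigma is bounded), (A4) bounds the
  exponential moment, and the log-drift satisfies
    ln (e^{-V} P e^V)(x) \<le> q(1+\<eta>) m(x)^2 - q x^2 + L,   L = ln E e^{\<kappa> \<epsilon>^2}.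
  By (A3), m(x)^2 \<le> \<theta> x^2 for large |x| with \<theta> < 1; choosing \<eta> with
  (1+\<eta>)\<theta> < 1 makes the right-hand side \<le> -\<delta> V(x) outside a compact
  interval, while on that interval it is bounded because mu is locally bounded.
\<close>

lemma drift_outside_interval:
  fixes q c \<theta> L t m2 \<Lambda> :: real
  assumes q: "q > 0" and c: "c \<ge> 0"
    and m2: "m2 \<le> \<theta> * t\<^sup>2" and \<Lambda>: "\<Lambda> \<le> q * c * m2 - q * t\<^sup>2 + L"
    and large: "\<bar>L\<bar> + (1 - c * \<theta>) / 2 \<le> (1 - c * \<theta>) / 2 * (q * t\<^sup>2)"
  shows "\<Lambda> \<le> - ((1 - c * \<theta>) / 2) * (1 + q * t\<^sup>2)"
proof -
  define d where "d = (1 - c * \<theta>) / 2"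
  have "q * c * m2 \<le> q * c * (\<theta> * t\<^sup>2)"
    using m2 q c by (intro mult_left_mono) auto
  moreover have "q * c * (\<theta> * t\<^sup>2) = (1 - 2 * d) * (q * t\<^sup>2)"
    by (simp add: d_def field_simps)
  ultimately have "\<Lambda> \<le> - (2 * d) * (q * t\<^sup>2) + L"
    using \<Lambda> by (simp add: algebra_simps)
  then show ?thesis
    using large abs_ge_self[of L] unfolding d_def[symmetric] by (simp add: algebra_simps)
qed

lemma drift_criterion:
  fixes m \<Lambda> :: "real \<Rightarrow> real"
  assumes q: "q > 0" and c: "c \<ge> 0" and c\<theta>: "c * \<theta> < 1"
    and contraction: "\<And>x. R \<le> \<bar>x\<bar> \<Longrightarrow> (m x)\<^sup>2 \<le> \<theta> * x\<^sup>2"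
    and locally_bounded: "\<And>K. \<exists>B. \<forall>x\<in>{-K..K}. \<bar>m x\<bar> \<le> B"
    and bound: "\<And>x. \<Lambda> x \<le> q * c * (m x)\<^sup>2 - q * x\<^sup>2 + L"
  shows "\<exists>K>0. \<exists>\<delta>>0. \<exists>b>0. \<forall>x. \<Lambda> x \<le> - \<delta> * (1 + q * x\<^sup>2) + b * indicator {-K..K} x"
proof -
  define \<delta> where "\<delta> = (1 - c * \<theta>) / 2"
  have \<delta>: "\<delta> > 0" using c\<theta> by (simp add: \<delta>_def)
  define K where "K = max R 1 + (\<bar>L\<bar> + \<delta>) / (q * \<delta>)"
  have "(\<bar>L\<bar> + \<delta>) / (q * \<delta>) \<ge> 0" using q \<delta> by simp
  then have K1: "K \<ge> 1" and KR: "K \<ge> R" and KL: "(\<bar>L\<bar> + \<delta>) / (q * \<delta>) \<le> K"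
    by (auto simp: K_def)
  obtain B where B: "\<And>x. x \<in> {-K..K} \<Longrightarrow> \<bar>m x\<bar> \<le> B"
    using locally_bounded by blast
  define b where "b = q * c * B\<^sup>2 + \<bar>L\<bar> + \<delta> * (1 + q * K\<^sup>2) + 1"
  have b: "b > 0" using q c \<delta> by (simp add: b_def add_nonneg_pos)
  have "\<Lambda> x \<le> - \<delta> * (1 + q * x\<^sup>2) + b * indicator {-K..K} x" for x
  proof (cases "x \<in> {-K..K}")
    case True
    have "(m x)\<^sup>2 \<le> B\<^sup>2" and "x\<^sup>2 \<le> K\<^sup>2"
      using B[OF True] True by (auto intro!: power2_le_iff_abs_le[THEN iffD2])
    then have "q * c * (m x)\<^sup>2 \<le> q * c * B\<^sup>2" and "\<delta> * (q * x\<^sup>2) \<le> \<delta> * (q * K\<^sup>2)"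
      using q c \<delta> by (auto intro!: mult_left_mono)
    moreover have "q * x\<^sup>2 \<ge> 0" using q by simp
    ultimately show ?thesis
      using bound[of x] True abs_ge_self[of L] by (simp add: b_def algebra_simps)
  next
    case False
    then have x: "K \<le> \<bar>x\<bar>" by auto
    have "K \<le> x\<^sup>2"
      using mult_mono[OF x K1[THEN order_trans, OF x]] K1 by (simp add: power2_eq_square)
    then have "K * (q * \<delta>) \<le> x\<^sup>2 * (q * \<delta>)"
      using q \<delta> by (intro mult_right_mono) auto
    moreover have "\<bar>L\<bar> + \<delta> \<le> K * (q * \<delta>)"
      using KL q \<delta> by (simp add: divide_le_eq)
    ultimately have "\<bar>L\<bar> + \<delta> \<le> \<delta> * (q * x\<^sup>2)"
      by (simp add: algebra_simps)
    then show ?thesis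
      using drift_outside_interval[OF q c contraction bound] x KR False
      by (simp add: \<delta>_def)
  qed
  moreover have "K > 0" using K1 by simp
  ultimately show ?thesis using \<delta> b by blast
qed

lemma eventual_square_contraction:
  fixes g :: "real \<Rightarrow> real"
  assumes "Limsup at_infinity (\<lambda>x. ereal (\<bar>g x\<bar> / \<bar>x\<bar>)) < 1"
  shows "\<exists>\<theta>>0. \<theta> < 1 \<and> (\<exists>R. \<forall>x. R \<le> \<bar>x\<bar> \<longrightarrow> (g x)\<^sup>2 \<le> \<theta> * x\<^sup>2)"
proof -
  obtain r where r: "Limsup at_infinity (\<lambda>x. ereal (\<bar>g x\<bar> / \<bar>x\<bar>)) < ereal r" and "r < 1"
    using ereal_dense2[OF assms] by auto
  have "eventually (\<lambda>x. ereal (\<bar>g x\<bar> / \<bar>x\<bar>) < ereal r) at_infinity"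
    by (rule Limsup_lessD[OF r])
  then obtain R where R: "\<And>x::real. R \<le> norm x \<Longrightarrow> \<bar>g x\<bar> / \<bar>x\<bar> < r"
    unfolding eventually_at_infinity by auto
  define \<rho> where "\<rho> = max r (1/2)"
  have \<rho>: "0 < \<rho>" "\<rho> < 1" using \<open>r < 1\<close> by (auto simp: \<rho>_def)
  have "(g x)\<^sup>2 \<le> \<rho>\<^sup>2 * x\<^sup>2" if x: "max R 1 \<le> \<bar>x\<bar>" for x
  proof -
    have "\<bar>g x\<bar> / \<bar>x\<bar> < \<rho>" using R[of x] x by (simp add: \<rho>_def)
    moreover have "\<bar>x\<bar> > 0" using x by linarith
    ultimately have "\<bar>g x\<bar> \<le> \<rho> * \<bar>x\<bar>" by (simp add: pos_divide_less_eq)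
    then have "\<bar>g x\<bar>\<^sup>2 \<le> (\<rho> * \<bar>x\<bar>)\<^sup>2" by (intro power_mono) auto
    then show ?thesis by (simp add: power_mult_distrib)
  qed
  moreover have "0 < \<rho>\<^sup>2" "\<rho>\<^sup>2 < 1"
    using \<rho> by (auto simp: power_less_one_iff abs_less_iff)
  ultimately show ?thesis by blast
qed

lemma peter_paul:
  fixes a b \<eta> :: real
  assumes "\<eta> > 0"
  shows "(a + b)\<^sup>2 \<le> (1 + \<eta>) * a\<^sup>2 + (1 + 1 / \<eta>) * b\<^sup>2"
proof -
  have "\<eta> * ((1 + \<eta>) * a\<^sup>2 + (1 + 1 / \<eta>) * b\<^sup>2 - (a + b)\<^sup>2) = (\<eta> * a - b)\<^sup>2"
    using assms by (simp add: field_simps power2_eq_square)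
  then have "\<eta> * ((1 + \<eta>) * a\<^sup>2 + (1 + 1 / \<eta>) * b\<^sup>2 - (a + b)\<^sup>2) \<ge> 0" by simp
  then show ?thesis using assms by (simp add: zero_le_mult_iff)
qed

lemma exp_quadratic_domination:
  fixes m s e q \<eta> \<kappa> :: real
  assumes \<eta>: "\<eta> > 0" and q: "q \<ge> 0" and noise: "q * (1 + 1 / \<eta>) * s\<^sup>2 \<le> \<kappa>"
  shows "exp (1 + q * (m + s * e)\<^sup>2) \<le> exp (1 + q * (1 + \<eta>) * m\<^sup>2) * exp (\<kappa> * e\<^sup>2)"
proof -
  have "q * (m + s * e)\<^sup>2 \<le> q * ((1 + \<eta>) * m\<^sup>2 + (1 + 1 / \<eta>) * (s * e)\<^sup>2)"
    using peter_paul[OF \<eta>] q by (rule mult_left_mono)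
  also have "\<dots> = q * (1 + \<eta>) * m\<^sup>2 + (q * (1 + 1 / \<eta>) * s\<^sup>2) * e\<^sup>2"
    by (simp add: power_mult_distrib algebra_simps)
  also have "\<dots> \<le> q * (1 + \<eta>) * m\<^sup>2 + \<kappa> * e\<^sup>2"
    using noise by (simp add: mult_right_mono)
  finally show ?thesis by (simp add: exp_add[symmetric])
qed

lemma log_exp_moment_bound:
  fixes D :: "real measure"
  assumes D: "prob_space D" and sets_D: "sets D = sets borel"
    and gauss: "integrable D (\<lambda>e. exp (\<kappa> * e\<^sup>2))"
    and \<eta>: "\<eta> > 0" and q: "q \<ge> 0" and noise: "q * (1 + 1 / \<eta>) * s\<^sup>2 \<le> \<kappa>"
  shows "integrable D (\<lambda>e. exp (1 + q * (m + s * e)\<^sup>2)) \<and>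
    ln (exp (- v) * (\<integral>e. exp (1 + q * (m + s * e)\<^sup>2) \<partial>D))
      \<le> 1 + q * (1 + \<eta>) * m\<^sup>2 - v + ln (\<integral>e. exp (\<kappa> * e\<^sup>2) \<partial>D)"
proof -
  interpret prob_space D by (rule D)
  let ?g = "\<lambda>e. exp (1 + q * (m + s * e)\<^sup>2)"
  let ?h = "\<lambda>e. exp (1 + q * (1 + \<eta>) * m\<^sup>2) * exp (\<kappa> * e\<^sup>2)"
  have "0 \<le> q * (1 + 1 / \<eta>) * s\<^sup>2" using \<eta> q by simp
  then have \<kappa>: "\<kappa> \<ge> 0" using noise by linarith
  have g_meas: "?g \<in> borel_measurable D"
    unfolding measurable_cong_sets[OF sets_D refl] by measurable
  have h_int: "integrable D ?h" using gauss by simp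
  have g_int: "integrable D ?g"
    using exp_quadratic_domination[OF \<eta> q noise]
    by (intro Bochner_Integration.integrable_bound[OF h_int g_meas]) auto
  have g_le_h: "(\<integral>e. ?g e \<partial>D) \<le> (\<integral>e. ?h e \<partial>D)"
    using exp_quadratic_domination[OF \<eta> q noise] by (intro integral_mono[OF g_int h_int])
  have "(\<integral>e. 1 \<partial>D) \<le> (\<integral>e. ?g e \<partial>D)"
    using q by (intro integral_mono g_int) auto
  then have g_ge1: "1 \<le> (\<integral>e. ?g e \<partial>D)" by (simp add: prob_space)
  have "(\<integral>e. 1 \<partial>D) \<le> (\<integral>e. exp (\<kappa> * e\<^sup>2) \<partial>D)"
    using \<kappa> by (intro integral_mono gauss) auto
  then have gauss_ge1: "1 \<le> (\<integral>e. exp (\<kappa> * e\<^sup>2) \<partial>D)" by (simp add: prob_space)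
  have "ln (exp (- v) * (\<integral>e. ?g e \<partial>D)) = - v + ln (\<integral>e. ?g e \<partial>D)"
    using g_ge1 by (simp add: ln_mult)
  also have "ln (\<integral>e. ?g e \<partial>D) \<le> ln (\<integral>e. ?h e \<partial>D)"
    using g_le_h g_ge1 by simp
  also have "ln (\<integral>e. ?h e \<partial>D) = 1 + q * (1 + \<eta>) * m\<^sup>2 + ln (\<integral>e. exp (\<kappa> * e\<^sup>2) \<partial>D)"
    using gauss_ge1 by (simp add: ln_mult)
  finally show ?thesis using g_int by simp
qed

lemma uniform_small_scale:
  fixes s :: "real \<Rightarrow> real"
  assumes bdd: "\<And>x. \<bar>s x\<bar> \<le> M" and a: "a > 0" and \<kappa>: "\<kappa> > 0"
  shows "\<exists>q>0. \<forall>x. q * a * (s x)\<^sup>2 \<le> \<kappa>"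
proof -
  define q where "q = \<kappa> / (a * (M\<^sup>2 + 1))"
  have M: "M\<^sup>2 + 1 > 0" by (simp add: add_nonneg_pos)
  have q: "q > 0" using a \<kappa> M by (simp add: q_def)
  have "q * a * (s x)\<^sup>2 \<le> \<kappa>" for x
  proof -
    have "(s x)\<^sup>2 \<le> M\<^sup>2 + 1"
      using power2_le_iff_abs_le[of M "s x"] bdd[of x] by (smt (verit) abs_ge_zero)
    then have "q * a * (s x)\<^sup>2 \<le> q * a * (M\<^sup>2 + 1)"
      using q a by (intro mult_left_mono) auto
    also have "\<dots> = \<kappa>" using a M by (simp add: q_def)
    finally show ?thesis .
  qed
  then show ?thesis using q by blast
qed

lemma shifted_locally_bounded:
  fixes mu :: "real \<Rightarrow> real"
  assumes "\<And>S. compact S \<Longrightarrow> bounded (mu ` S)"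
  shows "\<exists>B. \<forall>x\<in>{-K..K}. \<bar>x + mu x\<bar> \<le> B"
proof -
  obtain B where "\<And>x. x \<in> {-K..K} \<Longrightarrow> \<bar>mu x\<bar> \<le> B"
    using assms[of "{-K..K}"] unfolding bounded_iff by (auto simp del: atLeastAtMost_iff)
  then have "\<forall>x\<in>{-K..K}. \<bar>x + mu x\<bar> \<le> \<bar>K\<bar> + B" by force
  then show ?thesis by blast
qed

theorem propositionp2p5:
  fixes mu sigma f :: "real \<Rightarrow> real" and D :: "real measure"
  assumes meas_mu: "mu \<in> borel_measurable borel"
    and meas_sigma: "sigma \<in> borel_measurable borel"
    (* (A1) eps_1 has law D with Lebesgue density f *)
    and f_meas: "f \<in> borel_measurable borel"
    and f_nonneg: "\<And>x. f x \<ge> 0"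
    and D_def: "D = density lborel (\<lambda>x. ennreal (f x))"
    and D_prob: "prob_space D"
    and f_bdd: "\<And>S. compact S \<Longrightarrow> \<exists>M. \<forall>x\<in>S. f x \<le> M"
    and f_pos: "\<And>S. compact S \<Longrightarrow> \<exists>c>0. \<forall>x\<in>S. f x \<ge> c"
    (* (A2) *)
    and mu_locbdd: "\<And>S. compact S \<Longrightarrow> bounded (mu ` S)"
    and sigma_pos: "\<And>x. sigma x > 0"
    and sigma_away: "\<And>S. compact S \<Longrightarrow> \<exists>c>0. \<forall>x\<in>S. sigma x \<ge> c"
    and sigma_bdd: "\<exists>M. \<forall>x. sigma x \<le> M"
    (* (A3) *)
    and A3: "Limsup at_infinity (\<lambda>x. ereal (\<bar>x + mu x\<bar> / \<bar>x\<bar>)) < 1"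
    (* (A4) *)
    and A4_exp: "\<exists>\<kappa>>0. integrable D (\<lambda>e. exp (\<kappa> * e\<^sup>2))"
    and A4_mean: "integral\<^sup>L D (\<lambda>e. e) = 0"
  shows "\<exists>q>0. \<exists>K>0. \<exists>\<delta>>0. \<exists>b>0.
           (\<forall>x::real.
              integrable D (\<lambda>e. exp ((\<lambda>y. 1 + q * y\<^sup>2) (x + mu x + sigma x * e))) \<and>
              ln (exp (- (1 + q * x\<^sup>2)) * Pexp D mu sigma (\<lambda>y. 1 + q * y\<^sup>2) x)
                \<le> - \<delta> * (1 + q * x\<^sup>2) + b * indicator {-K..K} x)"
proof -
  have sets_D: "sets D = sets borel" unfolding D_def by simp
  obtain \<kappa> where \<kappa>: "\<kappa> > 0" and gauss: "integrable D (\<lambda>e. exp (\<kappa> * e\<^sup>2))"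
    using A4_exp by auto
  obtain \<theta> R where \<theta>: "0 < \<theta>" "\<theta> < 1"
    and contraction: "\<And>x. R \<le> \<bar>x\<bar> \<Longrightarrow> (x + mu x)\<^sup>2 \<le> \<theta> * x\<^sup>2"
    using eventual_square_contraction[of "\<lambda>x. x + mu x", OF A3] by auto
  define \<eta> where "\<eta> = (1 - \<theta>) / (2 * \<theta>)"
  have \<eta>: "\<eta> > 0" and c\<theta>: "(1 + \<eta>) * \<theta> < 1"
    using \<theta> by (auto simp: \<eta>_def field_simps)
  obtain M where "\<And>x. \<bar>sigma x\<bar> \<le> M"
    using sigma_bdd sigma_pos by (metis abs_of_pos)
  then obtain q where q: "q > 0" and noise: "\<And>x. q * (1 + 1 / \<eta>) * (sigma x)\<^sup>2 \<le> \<kappa>"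
    using uniform_small_scale[of sigma M "1 + 1 / \<eta>" \<kappa>] \<eta> \<kappa> by (auto simp: add_pos_pos)
  define L where "L = ln (\<integral>e. exp (\<kappa> * e\<^sup>2) \<partial>D)"
  define \<Lambda> where "\<Lambda> x = ln (exp (- (1 + q * x\<^sup>2)) * Pexp D mu sigma (\<lambda>y. 1 + q * y\<^sup>2) x)" for x
  have moment: "integrable D (\<lambda>e. exp ((\<lambda>y. 1 + q * y\<^sup>2) (x + mu x + sigma x * e))) \<and>
      \<Lambda> x \<le> q * (1 + \<eta>) * (x + mu x)\<^sup>2 - q * x\<^sup>2 + L" for x
    using log_exp_moment_bound[OF D_prob sets_D gauss \<eta> less_imp_le[OF q] noise[of x],
        where m = "x + mu x" and v = "1 + q * x\<^sup>2"]
    by (simp add: \<Lambda>_def L_def Pexp_def add.assoc)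
  have bound: "\<And>x. \<Lambda> x \<le> q * (1 + \<eta>) * (x + mu x)\<^sup>2 - q * x\<^sup>2 + L"
    using moment by blast
  have "1 + \<eta> \<ge> 0" using \<eta> by simp
  from drift_criterion[OF q this c\<theta> contraction shifted_locally_bounded[OF mu_locbdd] bound]
  obtain K \<delta> b where "K > 0" "\<delta> > 0" "b > 0"
    and "\<And>x. \<Lambda> x \<le> - \<delta> * (1 + q * x\<^sup>2) + b * indicator {-K..K} x"
    by blast
  with q moment show ?thesis unfolding \<Lambda>_def by blast
qed

end
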